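(* Let $(Z,\to)$, $R$ and $H$ be as in the context. Then (i) $H=\mathrm{Aut}(Z,R)$; and (ii) the structure $(Z,R)$ is homogeneous, i.e. every isomorphism between finite substructures of $(Z,R)$ extends to an automorphism of $(Z,R)$.
   Context: Let $Z$ be a countable dense subset of the unit circle containing no two antipodal points, and for distinct $x,y\in Z$ put $x\to y$ iff the clockwise distance from $x$ to $y$ along the circle is less than the anticlockwise distance (this tournament is the countable dense local order). Define a ternary relation $R$ on $Z$ by $R(x;y,z)$ iff $(y\to x\wedge y\to z\wedge x\to z)\vee(z\to x\wedge z\to y\wedge x\to y)$. Let $H$ be the group of all permutations $g$ of $Z$ that either preserve $\to$ (automorphisms) or reverse it (i.e. $x\to y$ iff $y^g\to x^g$ for all distinct $x,y$). *)

theory Defs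
  imports "HOL-Analysis.Analysis"
begin

text \<open>Points of the unit circle are unit complex numbers. Anticlockwise = positive
  direction (multiplication by cis t, t > 0); clockwise = negative direction.\<close>

definition cw_dist :: "complex \<Rightarrow> complex \<Rightarrow> real" where
  "cw_dist x y = (THE t. 0 \<le> t \<and> t < 2 * pi \<and> y = x * cis (- t))"

definition acw_dist :: "complex \<Rightarrow> complex \<Rightarrow> real" where
  "acw_dist x y = (THE t. 0 \<le> t \<and> t < 2 * pi \<and> y = x * cis t)"

definition larrow :: "complex \<Rightarrow> complex \<Rightarrow> bool" where
  "larrow x y \<longleftrightarrow> x \<noteq> y \<and> cw_dist x y < acw_dist x y"

definition Rrel :: "complex \<Rightarrow> complex \<Rightarrow> complex \<Rightarrow> bool" where
  "Rrel x y z \<longleftrightarrow>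
     (larrow y x \<and> larrow y z \<and> larrow x z) \<or> (larrow z x \<and> larrow z y \<and> larrow x y)"

definition in_H :: "complex set \<Rightarrow> (complex \<Rightarrow> complex) \<Rightarrow> bool" where
  "in_H Z g \<longleftrightarrow> bij_betw g Z Z \<and>
     ((\<forall>x\<in>Z. \<forall>y\<in>Z. x \<noteq> y \<longrightarrow> (larrow x y \<longleftrightarrow> larrow (g x) (g y))) \<or>
      (\<forall>x\<in>Z. \<forall>y\<in>Z. x \<noteq> y \<longrightarrow> (larrow x y \<longleftrightarrow> larrow (g y) (g x))))"

definition autR :: "complex set \<Rightarrow> (complex \<Rightarrow> complex) \<Rightarrow> bool" where
  "autR Z g \<longleftrightarrow> bij_betw g Z Z \<and>
     (\<forall>x\<in>Z. \<forall>y\<in>Z. \<forall>z\<in>Z. Rrel x y z \<longleftrightarrow> Rrel (g x) (g y) (g z))"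

end

theory Submission
  imports Defs
begin

text \<open>For unit complex numbers, x \<rightarrow> y holds iff Im (x * cnj y) > 0. On three points the
  betweenness relation R determines a tournament up to reversing all of its edges, so a map
  preserving R preserves or reverses \<rightarrow>; hence H = Aut(Z,R). Complex conjugation reverses \<rightarrow>,
  so homogeneity reduces to extending finite partial isomorphisms of (Z,\<rightarrow>), which is done by a
  back-and-forth argument. For the one-point extension, rotate a matched pair to (1,1); folding the
  lower half-circle onto the upper one then turns the local order into a linear order on (-1,1),
  where the new point can be interpolated, and the density of Z supplies a point of Z in the
  resulting open set of the circle.\<close>

section \<open>Tournaments and betweenness\<close>

definition tournament_on :: "'a set \<Rightarrow> ('a \<Rightarrow> 'a \<Rightarrow> bool) \<Rightarrow> bool" where
  "tournament_on A E \<longleftrightarrow> (\<forall>x \<in> A. \<not> E x x) \<and> (\<forall>x \<in> A. \<forall>y \<in> A. x \<noteq> y \<longrightarrow> E x y \<noteq> E y x)"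

definition between :: "('a \<Rightarrow> 'a \<Rightarrow> bool) \<Rightarrow> 'a \<Rightarrow> 'a \<Rightarrow> 'a \<Rightarrow> bool" where
  "between E x y z \<longleftrightarrow> (E y x \<and> E y z \<and> E x z) \<or> (E z x \<and> E z y \<and> E x y)"

lemma Rrel_eq_between: "Rrel = between larrow"
  by (intro ext) (simp add: Rrel_def between_def)

lemma between_converse: "between (\<lambda>x y. E y x) = between E"
  by (intro ext) (auto simp: between_def)

lemma between_transfer:
  assumes "\<forall>x \<in> A. \<forall>y \<in> A. E x y \<longleftrightarrow> F (f x) (f y)" "x \<in> A" "y \<in> A" "z \<in> A"
  shows "between E x y z \<longleftrightarrow> between F (f x) (f y) (f z)"
  using assms by (simp add: between_def)

lemma tournament_onD:
  "tournament_on B E \<Longrightarrow> x \<in> B \<Longrightarrow> y \<in> B \<Longrightarrow> E y x \<longleftrightarrow> x \<noteq> y \<and> \<not> E x y"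
  unfolding tournament_on_def by (cases "x = y") blast+

text \<open>On three points, betweenness determines the tournament up to reversing all edges.\<close>
lemma between_triangle:
  assumes "tournament_on B E" "x \<in> B" "y \<in> B" "z \<in> B" "x' \<in> B" "y' \<in> B" "z' \<in> B"
    and "distinct [x, y, z]" "distinct [x', y', z']"
    and "between E x y z \<longleftrightarrow> between E x' y' z'" "between E y x z \<longleftrightarrow> between E y' x' z'"
      "between E z x y \<longleftrightarrow> between E z' x' y'"
  shows "(E x y \<longleftrightarrow> E x' y') \<longleftrightarrow> (E x z \<longleftrightarrow> E x' z')"
  using assms(8-) tournament_onD[OF assms(1)] assms(2-7) unfolding between_def
  by (metis (full_types) distinct_length_2_or_more)

lemma const_on_distinct_pairs:
  assumes swap: "\<And>x y. x \<in> A \<Longrightarrow> y \<in> A \<Longrightarrow> P y x = P x y"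
    and fan: "\<And>x y z. x \<in> A \<Longrightarrow> y \<in> A \<Longrightarrow> z \<in> A \<Longrightarrow> x \<noteq> y \<Longrightarrow> x \<noteq> z \<Longrightarrow> P x y = P x z"
    and "x \<in> A" "y \<in> A" "u \<in> A" "v \<in> A" "x \<noteq> y" "u \<noteq> v"
  shows "P x y = P u v"
proof (cases "x = u")
  case True
  then show ?thesis using fan[of x y v] assms(3-8) by simp
next
  case False
  then have "P x y = P x u" using fan[of x y u] assms(3-8) by simp
  also have "\<dots> = P u x" using swap[of x u] assms(3-8) by simp
  also have "\<dots> = P u v" using fan[of u x v] assms(3-8) False by simp
  finally show ?thesis .
qed

lemma between_iso_preserves_or_reverses:
  assumes tour: "tournament_on B E" and "A \<subseteq> B" "f ` A \<subseteq> B" "inj_on f A"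
    and between_iso: "\<forall>x \<in> A. \<forall>y \<in> A. \<forall>z \<in> A. between E x y z \<longleftrightarrow> between E (f x) (f y) (f z)"
  shows "(\<forall>x \<in> A. \<forall>y \<in> A. E x y \<longleftrightarrow> E (f x) (f y)) \<or> (\<forall>x \<in> A. \<forall>y \<in> A. E x y \<longleftrightarrow> E (f y) (f x))"
proof -
  define agree where "agree x y \<longleftrightarrow> (E x y \<longleftrightarrow> E (f x) (f y))" for x y
  have B: "x \<in> B" "f x \<in> B" if "x \<in> A" for x using that assms(2,3) by auto
  have f_eq: "f x = f y \<longleftrightarrow> x = y" if "x \<in> A" "y \<in> A" for x y
    using inj_on_eq_iff[OF \<open>inj_on f A\<close> that] .
  have flip: "E y x \<longleftrightarrow> x \<noteq> y \<and> \<not> E x y" "E (f y) (f x) \<longleftrightarrow> x \<noteq> y \<and> \<not> E (f x) (f y)"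
    if "x \<in> A" "y \<in> A" for x y
    using tournament_onD[OF tour B(1)[OF that(1)] B(1)[OF that(2)]]
      tournament_onD[OF tour B(2)[OF that(1)] B(2)[OF that(2)]] f_eq[OF that] by simp_all
  have agree_swap: "agree y x = agree x y" if "x \<in> A" "y \<in> A" for x y
    using flip[OF that] flip[OF that(2,1)] by (auto simp: agree_def)
  have agree_fan: "agree x y = agree x z" if "x \<in> A" "y \<in> A" "z \<in> A" "x \<noteq> y" "x \<noteq> z" for x y z
  proof (cases "y = z")
    case False
    then show ?thesis
      unfolding agree_def using that f_eq between_iso
      by (intro between_triangle[OF tour B(1)[OF that(1)] B(1)[OF that(2)] B(1)[OF that(3)]
            B(2)[OF that(1)] B(2)[OF that(2)] B(2)[OF that(3)]]) simp_all
  qed simp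
  show ?thesis
  proof (cases "\<exists>x \<in> A. \<exists>y \<in> A. x \<noteq> y \<and> agree x y")
    case True
    then obtain x0 y0 where "x0 \<in> A" "y0 \<in> A" "x0 \<noteq> y0" "agree x0 y0" by blast
    then have "agree x y" if "x \<in> A" "y \<in> A" for x y
      using const_on_distinct_pairs[of A agree, OF agree_swap agree_fan, of x y x0 y0] flip[OF that] that
      by (cases "x = y") (simp_all add: agree_def)
    then show ?thesis unfolding agree_def by simp
  next
    case False
    then have "E x y \<longleftrightarrow> E (f y) (f x)" if "x \<in> A" "y \<in> A" for x y
      using flip[OF that] flip[OF that(2,1)] that by (auto simp: agree_def)
    then show ?thesis by simp
  qed
qed

section \<open>Back-and-forth\<close>

definition partial_iso :: "('a \<Rightarrow> 'a \<Rightarrow> bool) \<Rightarrow> ('a \<times> 'a) set \<Rightarrow> bool" where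
  "partial_iso E S \<longleftrightarrow> (\<forall>(a, b) \<in> S. \<forall>(c, d) \<in> S. (a = c \<longleftrightarrow> b = d) \<and> (E a c \<longleftrightarrow> E b d))"

lemma partial_isoI:
  "(\<And>a b c d. (a, b) \<in> S \<Longrightarrow> (c, d) \<in> S \<Longrightarrow> (a = c \<longleftrightarrow> b = d) \<and> (E a c \<longleftrightarrow> E b d)) \<Longrightarrow> partial_iso E S"
  unfolding partial_iso_def by auto

lemma partial_isoD:
  "partial_iso E S \<Longrightarrow> (a, b) \<in> S \<Longrightarrow> (c, d) \<in> S \<Longrightarrow> (a = c \<longleftrightarrow> b = d) \<and> (E a c \<longleftrightarrow> E b d)"
  unfolding partial_iso_def by fast

lemma partial_iso_converse: "partial_iso E S \<Longrightarrow> partial_iso E (converse S)"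
  by (rule partial_isoI) (simp add: partial_isoD)

lemma partial_iso_graph:
  "partial_iso E ((\<lambda>x. (x, f x)) ` A) \<longleftrightarrow>
     inj_on f A \<and> (\<forall>x \<in> A. \<forall>y \<in> A. E x y \<longleftrightarrow> E (f x) (f y))"
  unfolding partial_iso_def inj_on_def by auto

lemma partial_iso_total_imp_iso:
  assumes "partial_iso E U" "U \<subseteq> A \<times> B" "A \<subseteq> Domain U" "B \<subseteq> Range U"
  shows "\<exists>g. bij_betw g A B \<and> (\<forall>x \<in> A. \<forall>y \<in> A. E x y \<longleftrightarrow> E (g x) (g y)) \<and> (\<forall>(a, b) \<in> U. g a = b)"
proof -
  define g where "g x = (SOME y. (x, y) \<in> U)" for x
  have graph: "(x, g x) \<in> U" if "x \<in> A" for x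
  proof -
    have "\<exists>y. (x, y) \<in> U" using that assms(3) by blast
    then show ?thesis unfolding g_def by (rule someI_ex)
  qed
  have graph_unique: "g a = b" if "(a, b) \<in> U" for a b
  proof -
    have "a \<in> A" using that assms(2) by blast
    then show ?thesis using partial_isoD[OF assms(1) that graph[OF \<open>a \<in> A\<close>]] by simp
  qed
  have "bij_betw g A B"
  proof (rule bij_betw_imageI)
    show "inj_on g A"
      by (rule inj_onI) (use partial_isoD[OF assms(1) graph graph] in simp)
    show "g ` A = B"
    proof
      show "g ` A \<subseteq> B" using graph assms(2) by blast
      show "B \<subseteq> g ` A"
      proof
        fix y assume "y \<in> B"
        then obtain x where "(x, y) \<in> U" using assms(4) by blast
        then show "y \<in> g ` A" using graph_unique assms(2) by force
      qed
    qed
  qed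
  moreover have "\<forall>x \<in> A. \<forall>y \<in> A. E x y \<longleftrightarrow> E (g x) (g y)"
    using partial_isoD[OF assms(1) graph graph] by simp
  ultimately show ?thesis using graph_unique by blast
qed

lemma partial_iso_UN_incseq:
  assumes "incseq F" "\<And>n. partial_iso E (F n)"
  shows "partial_iso E (\<Union>n. F n)"
proof (rule partial_isoI)
  fix x y u v assume "(x, y) \<in> (\<Union>n. F n)" "(u, v) \<in> (\<Union>n. F n)"
  then obtain m n where "(x, y) \<in> F m" "(u, v) \<in> F n" by blast
  then have "(x, y) \<in> F (max m n)" "(u, v) \<in> F (max m n)"
    using \<open>incseq F\<close> by (meson incseqD max.cobounded1 max.cobounded2 subsetD)+
  then show "(x = u \<longleftrightarrow> y = v) \<and> (E x u \<longleftrightarrow> E y v)"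
    using partial_isoD[OF assms(2)] by metis
qed

lemma partial_iso_extend_both:
  assumes forth_step: "\<And>S x. finite S \<Longrightarrow> S \<subseteq> A \<times> B \<Longrightarrow> partial_iso E S \<Longrightarrow> x \<in> A \<Longrightarrow>
      \<exists>y \<in> B. partial_iso E (insert (x, y) S)"
    and back_step: "\<And>S y. finite S \<Longrightarrow> S \<subseteq> A \<times> B \<Longrightarrow> partial_iso E S \<Longrightarrow> y \<in> B \<Longrightarrow>
      \<exists>x \<in> A. partial_iso E (insert (x, y) S)"
    and "finite S" "S \<subseteq> A \<times> B" "partial_iso E S" "x \<in> A" "y \<in> B"
  shows "\<exists>S'. S \<subseteq> S' \<and> finite S' \<and> S' \<subseteq> A \<times> B \<and> partial_iso E S' \<and> x \<in> Domain S' \<and> y \<in> Range S'"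
proof -
  obtain y' where y': "y' \<in> B" "partial_iso E (insert (x, y') S)"
    using forth_step[OF assms(3-6)] by blast
  then have "finite (insert (x, y') S)" "insert (x, y') S \<subseteq> A \<times> B"
    using assms(3,4,6) by auto
  from back_step[OF this y'(2) \<open>y \<in> B\<close>]
  obtain x' where "x' \<in> A" "partial_iso E (insert (x', y) (insert (x, y') S))" by blast
  with y' assms(3,4,6,7) show ?thesis
    by (intro exI[of _ "insert (x', y) (insert (x, y') S)"]) auto
qed

lemma back_and_forth_exhaustion:
  assumes "countable A" "countable B" "A \<noteq> {}" "B \<noteq> {}"
    and forth_step: "\<And>S x. finite S \<Longrightarrow> S \<subseteq> A \<times> B \<Longrightarrow> partial_iso E S \<Longrightarrow> x \<in> A \<Longrightarrow>
      \<exists>y \<in> B. partial_iso E (insert (x, y) S)"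
    and back_step: "\<And>S y. finite S \<Longrightarrow> S \<subseteq> A \<times> B \<Longrightarrow> partial_iso E S \<Longrightarrow> y \<in> B \<Longrightarrow>
      \<exists>x \<in> A. partial_iso E (insert (x, y) S)"
    and "finite S0" "S0 \<subseteq> A \<times> B" "partial_iso E S0"
  shows "\<exists>U. S0 \<subseteq> U \<and> U \<subseteq> A \<times> B \<and> partial_iso E U \<and> A \<subseteq> Domain U \<and> B \<subseteq> Range U"
proof -
  define good where "good S \<longleftrightarrow> finite S \<and> S \<subseteq> A \<times> B \<and> partial_iso E S" for S
  define a where "a = from_nat_into A"
  define b where "b = from_nat_into B"
  define step where
    "step n S = (SOME S'. S \<subseteq> S' \<and> good S' \<and> a n \<in> Domain S' \<and> b n \<in> Range S')" for n S
  have step: "S \<subseteq> step n S \<and> good (step n S) \<and> a n \<in> Domain (step n S) \<and> b n \<in> Range (step n S)"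
    if "good S" for S n
  proof -
    have "finite S" "S \<subseteq> A \<times> B" "partial_iso E S" using that by (simp_all add: good_def)
    moreover have "a n \<in> A" "b n \<in> B"
      using from_nat_into[OF \<open>A \<noteq> {}\<close>] from_nat_into[OF \<open>B \<noteq> {}\<close>] by (simp_all add: a_def b_def)
    ultimately have "\<exists>S'. S \<subseteq> S' \<and> finite S' \<and> S' \<subseteq> A \<times> B \<and> partial_iso E S' \<and>
        a n \<in> Domain S' \<and> b n \<in> Range S'"
      by (rule partial_iso_extend_both[rotated 2]) (fact forth_step back_step)+
    then have "\<exists>S'. S \<subseteq> S' \<and> good S' \<and> a n \<in> Domain S' \<and> b n \<in> Range S'"
      unfolding good_def by blast
    then show ?thesis unfolding step_def by (rule someI_ex)
  qed
  define F where "F = rec_nat S0 step"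
  have F_0: "F 0 = S0" and F_Suc: "F (Suc n) = step n (F n)" for n by (simp_all add: F_def)
  have good_F: "good (F n)" for n
    by (induction n) (use assms(7-9) step in \<open>simp_all add: F_0 F_Suc good_def\<close>)
  have F_step: "F n \<subseteq> F (Suc n) \<and> a n \<in> Domain (F (Suc n)) \<and> b n \<in> Range (F (Suc n))" for n
    using step[OF good_F] by (simp add: F_Suc)
  have "partial_iso E (\<Union>n. F n)"
    using F_step good_F by (intro partial_iso_UN_incseq incseq_SucI) (simp_all add: good_def)
  moreover have "A \<subseteq> Domain (\<Union>n. F n)"
  proof
    fix x assume "x \<in> A"
    then obtain n where "x = a n" using from_nat_into_surj[OF \<open>countable A\<close>] a_def by metis
    then show "x \<in> Domain (\<Union>n. F n)" using F_step[of n] by blast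
  qed
  moreover have "B \<subseteq> Range (\<Union>n. F n)"
  proof
    fix y assume "y \<in> B"
    then obtain n where "y = b n" using from_nat_into_surj[OF \<open>countable B\<close>] b_def by metis
    then show "y \<in> Range (\<Union>n. F n)" using F_step[of n] by blast
  qed
  moreover have "S0 \<subseteq> (\<Union>n. F n)" by (metis F_0 UNIV_I UN_upper)
  moreover have "(\<Union>n. F n) \<subseteq> A \<times> B" using good_F by (auto simp: good_def)
  ultimately show ?thesis by (intro exI[of _ "\<Union>n. F n"]) simp
qed

lemma back_and_forth:
  assumes "countable A" "countable B" "A \<noteq> {}" "B \<noteq> {}"
    and "\<And>S x. finite S \<Longrightarrow> S \<subseteq> A \<times> B \<Longrightarrow> partial_iso E S \<Longrightarrow> x \<in> A \<Longrightarrow>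
      \<exists>y \<in> B. partial_iso E (insert (x, y) S)"
    and "\<And>S y. finite S \<Longrightarrow> S \<subseteq> A \<times> B \<Longrightarrow> partial_iso E S \<Longrightarrow> y \<in> B \<Longrightarrow>
      \<exists>x \<in> A. partial_iso E (insert (x, y) S)"
    and "finite S0" "S0 \<subseteq> A \<times> B" "partial_iso E S0"
  shows "\<exists>g. bij_betw g A B \<and> (\<forall>x \<in> A. \<forall>y \<in> A. E x y \<longleftrightarrow> E (g x) (g y)) \<and> (\<forall>(a, b) \<in> S0. g a = b)"
proof -
  obtain U where U: "S0 \<subseteq> U" "U \<subseteq> A \<times> B" "partial_iso E U" "A \<subseteq> Domain U" "B \<subseteq> Range U"
    using back_and_forth_exhaustion[OF assms] by blast
  from partial_iso_total_imp_iso[OF U(3,2,4,5)] obtain g where "bij_betw g A B"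
    "\<forall>x \<in> A. \<forall>y \<in> A. E x y \<longleftrightarrow> E (g x) (g y)" "\<forall>(a, b) \<in> U. g a = b"
    by (elim exE conjE)
  with \<open>S0 \<subseteq> U\<close> show ?thesis by fast
qed

section \<open>The local order on the unit circle\<close>

text \<open>For unit x and y, wedge x y is the sine of the anticlockwise angle from y to x.\<close>
definition wedge :: "complex \<Rightarrow> complex \<Rightarrow> real" where
  "wedge x y = Im (x * cnj y)"

lemma wedge_eq: "wedge x y = Im x * Re y - Re x * Im y"
  by (simp add: wedge_def)

lemma wedge_swap: "wedge y x = - wedge x y"
  by (simp add: wedge_eq)

lemma wedge_self [simp]: "wedge x x = 0"
  by (simp add: wedge_eq)

lemma wedge_one: "wedge x 1 = Im x"
  by (simp add: wedge_eq)

lemma wedge_scale: "wedge (of_real r * x) (of_real s * y) = r * s * wedge x y"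
  by (simp add: wedge_eq algebra_simps)

lemma wedge_cnj: "wedge (cnj x) (cnj y) = wedge y x"
  by (simp add: wedge_eq)

lemma unit_mult_cnj: "norm u = 1 \<Longrightarrow> u * cnj u = 1"
  using complex_norm_square[of u] by simp

lemma wedge_rotate:
  assumes "norm u = 1"
  shows "wedge (x * u) (y * u) = wedge x y"
proof -
  have "x * u * cnj (y * u) = x * cnj y * (u * cnj u)" by (simp add: ac_simps)
  then show ?thesis using unit_mult_cnj[OF assms] by (simp only: wedge_def mult_1_right)
qed

lemma wedge_eq_0_iff:
  assumes "norm x = 1" "norm y = 1"
  shows "wedge x y = 0 \<longleftrightarrow> x = y \<or> x = - y"
proof
  assume "wedge x y = 0"
  define w where "w = x * cnj y"
  have "norm w = 1" using assms by (simp add: w_def norm_mult)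
  moreover have "Im w = 0" using \<open>wedge x y = 0\<close> by (simp add: wedge_def w_def)
  ultimately have "w = 1 \<or> w = -1"
    using cmod_power2[of w] by (auto simp: complex_eq_iff power2_eq_1_iff)
  moreover have "w * y = x" using unit_mult_cnj[OF assms(2)] by (simp add: w_def ac_simps)
  ultimately show "x = y \<or> x = - y" by auto
qed (auto simp: wedge_eq)

lemma THE_cis_eq_Arg2pi:
  assumes "norm u = 1"
  shows "(THE t. 0 \<le> t \<and> t < 2 * pi \<and> cis t = u) = Arg2pi u"
proof (rule the_equality)
  show "0 \<le> Arg2pi u \<and> Arg2pi u < 2 * pi \<and> cis (Arg2pi u) = u"
    using Arg2pi_ge_0 Arg2pi_lt_2pi complex_norm_eq_1_exp[of u] assms
    by (simp add: cis_conv_exp)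
next
  fix t assume "0 \<le> t \<and> t < 2 * pi \<and> cis t = u"
  then show "t = Arg2pi u"
    using Arg2pi_unique[of 1 t u] by (simp add: cis_conv_exp)
qed

lemma acw_dist_eq:
  assumes "norm x = 1" "norm y = 1"
  shows "acw_dist x y = Arg2pi (y * cnj x)"
proof -
  have "y = x * c \<longleftrightarrow> c = y * cnj x" for c
    using unit_mult_cnj[OF assms(1)] by (auto simp: ac_simps)
  then show ?thesis
    using THE_cis_eq_Arg2pi[of "y * cnj x"] assms by (simp add: acw_dist_def norm_mult)
qed

lemma cw_dist_eq:
  assumes "norm x = 1" "norm y = 1"
  shows "cw_dist x y = Arg2pi (x * cnj y)"
proof -
  have "y = x * cis (- t) \<longleftrightarrow> cis t = x * cnj y" for t
  proof -
    have "y = x * cis (- t) \<longleftrightarrow> cis (- t) = y * cnj x"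
      using unit_mult_cnj[OF assms(1)] by (auto simp: ac_simps)
    also have "\<dots> \<longleftrightarrow> cis t = x * cnj y"
      by (metis cis_cnj complex_cnj_cnj complex_cnj_mult mult.commute)
    finally show ?thesis .
  qed
  then show ?thesis
    using THE_cis_eq_Arg2pi[of "x * cnj y"] assms by (simp add: cw_dist_def norm_mult)
qed

lemma larrow_irrefl [simp]: "\<not> larrow x x"
  by (simp add: larrow_def)

lemma larrow_iff_wedge:
  assumes "norm x = 1" "norm y = 1"
  shows "larrow x y \<longleftrightarrow> 0 < wedge x y"
proof -
  define w where "w = x * cnj y"
  have "norm w = 1" using assms by (simp add: w_def norm_mult)
  then have cnj_w: "cnj w = inverse w" using unit_mult_cnj inverse_unique by metis
  have "larrow x y \<longleftrightarrow> x \<noteq> y \<and> Arg2pi w < Arg2pi (cnj w)"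
    using cw_dist_eq[OF assms] acw_dist_eq[OF assms] by (simp add: larrow_def w_def mult.commute)
  also have "\<dots> \<longleftrightarrow> 0 < Im w"
  proof (cases "w \<in> \<real>")
    case True
    then show ?thesis by (simp add: cnj_w Arg2pi_inverse complex_is_Real_iff)
  next
    case False
    then have "x \<noteq> y" using unit_mult_cnj[OF assms(2)] by (auto simp: w_def)
    moreover have "Im w \<noteq> 0" using False by (auto simp: complex_is_Real_iff)
    ultimately show ?thesis
      using False Arg2pi_le_pi[of w] Arg2pi_eq_pi[of w] by (auto simp: cnj_w Arg2pi_inverse)
  qed
  finally show ?thesis by (simp add: wedge_def w_def)
qed

section \<open>Realising sign patterns on the circle\<close>

lemma sgn_wedge_upper:
  assumes "norm u = 1" "norm v = 1" "0 < Im u" "0 < Im v"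
  shows "sgn (wedge u v) = sgn (Re v - Re u)"
proof -
  have "\<bar>Re u\<bar> \<le> 1" "\<bar>Re v\<bar> \<le> 1"
    using abs_Re_le_cmod[of u] abs_Re_le_cmod[of v] assms by simp_all
  then have "\<bar>Re u * Re v\<bar> \<le> 1" by (simp add: abs_mult mult_le_one)
  then have pos: "0 < 1 + Re u * Re v + Im u * Im v" using mult_pos_pos[OF assms(3,4)] by (simp add: abs_le_iff)
  have "wedge u v * (Im u + Im v) = (Re v - Re u) * (1 + Re u * Re v + Im u * Im v)"
  proof -
    have "(Re u)\<^sup>2 + (Im u)\<^sup>2 = 1" "(Re v)\<^sup>2 + (Im v)\<^sup>2 = 1"
      using cmod_power2[of u] cmod_power2[of v] assms by simp_all
    then show ?thesis unfolding wedge_eq by algebra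
  qed
  then have "sgn (wedge u v) * sgn (Im u + Im v) = sgn (Re v - Re u) * sgn (1 + Re u * Re v + Im u * Im v)"
    by (metis sgn_mult)
  then show ?thesis using pos assms by simp
qed

text \<open>The real part of x after reflecting it through the origin into the upper half-plane.\<close>
definition fold_re :: "complex \<Rightarrow> real" where
  "fold_re x = sgn (Im x) * Re x"

lemma sgn_wedge_fold_re:
  assumes "norm x = 1" "norm y = 1" "Im x \<noteq> 0" "Im y \<noteq> 0"
  shows "sgn (wedge x y) = sgn (Im x) * sgn (Im y) * sgn (fold_re y - fold_re x)"
proof -
  define u where "u = of_real (sgn (Im x)) * x"
  define v where "v = of_real (sgn (Im y)) * y"
  have "x = of_real (sgn (Im x)) * u" "y = of_real (sgn (Im y)) * v"
    using assms(3,4) by (auto simp: u_def v_def sgn_if)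
  then have "wedge x y = sgn (Im x) * sgn (Im y) * wedge u v"
    using wedge_scale by metis
  moreover have "sgn (wedge u v) = sgn (Re v - Re u)"
    using assms by (intro sgn_wedge_upper) (auto simp: u_def v_def norm_mult sgn_if)
  ultimately show ?thesis by (simp add: sgn_mult u_def v_def fold_re_def)
qed

lemma fold_re_less_iff:
  assumes "norm a = 1" "norm b = 1" "norm c = 1" "norm d = 1" "Im a \<noteq> 0" "Im c \<noteq> 0"
    and "sgn (Im b) = sgn (Im a)" "sgn (Im d) = sgn (Im c)" "sgn (wedge a c) = sgn (wedge b d)"
  shows "fold_re a < fold_re c \<longleftrightarrow> fold_re b < fold_re d"
proof -
  have "Im b \<noteq> 0" "Im d \<noteq> 0" using assms(5-8) by (metis sgn_0_0)+
  then have "sgn (Im a) * sgn (Im c) * sgn (fold_re c - fold_re a)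
      = sgn (Im a) * sgn (Im c) * sgn (fold_re d - fold_re b)"
    using assms sgn_wedge_fold_re[of a c] sgn_wedge_fold_re[of b d] by simp
  then have "sgn (fold_re c - fold_re a) = sgn (fold_re d - fold_re b)"
    using assms(5,6) by (simp add: sgn_0_0)
  then show ?thesis by (simp add: sgn_if split: if_splits)
qed

lemma abs_fold_re_less_1:
  assumes "norm x = 1" "Im x \<noteq> 0"
  shows "\<bar>fold_re x\<bar> < 1"
proof -
  have "(Re x)\<^sup>2 + (Im x)\<^sup>2 = 1" using assms(1) cmod_power2[of x] by simp
  moreover have "0 < (Im x)\<^sup>2" using assms(2) by simp
  ultimately have "(Re x)\<^sup>2 < 1" by linarith
  then show ?thesis by (simp add: fold_re_def abs_mult abs_sgn_eq abs_square_less_1 assms(2))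
qed

lemma fold_re_surj:
  assumes "Im z \<noteq> 0" "-1 < t" "t < 1"
  shows "\<exists>p. norm p = 1 \<and> Im p \<noteq> 0 \<and> sgn (Im p) = sgn (Im z) \<and> fold_re p = t"
proof -
  define p where "p = of_real (sgn (Im z)) * Complex t (sqrt (1 - t\<^sup>2))"
  have "t\<^sup>2 < 1" using assms by (simp add: abs_square_less_1)
  then show ?thesis
    using assms(1) by (intro exI[of _ p]) (auto simp: p_def norm_mult cmod_def sgn_if fold_re_def)
qed

lemma monotone_interpolation:
  fixes P :: "(real \<times> real) set"
  assumes "finite P"
    and mono: "\<And>r s r' s'. (r, s) \<in> P \<Longrightarrow> (r', s') \<in> P \<Longrightarrow> r < r' \<longleftrightarrow> s < s'"
    and range: "\<And>r s. (r, s) \<in> P \<Longrightarrow> -1 < s \<and> s < 1"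
    and "x \<notin> fst ` P"
  shows "\<exists>t. -1 < t \<and> t < 1 \<and> (\<forall>(r, s) \<in> P. s \<noteq> t \<and> (r < x \<longleftrightarrow> s < t))"
proof -
  define lo where "lo = Max (insert (-1) {s. \<exists>r. (r, s) \<in> P \<and> r < x})"
  define hi where "hi = Min (insert 1 {s. \<exists>r. (r, s) \<in> P \<and> x < r})"
  have fin: "finite {s. \<exists>r. (r, s) \<in> P \<and> Q r}" for Q
    using finite_imageI[OF \<open>finite P\<close>, of snd] by (rule finite_subset[rotated]) force
  have below: "s \<le> lo" if "(r, s) \<in> P" "r < x" for r s
    unfolding lo_def using fin that by (intro Max_ge) auto
  have above: "hi \<le> s" if "(r, s) \<in> P" "x < r" for r s
    unfolding hi_def using fin that by (intro Min_le) auto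
  have "lo < hi"
    unfolding lo_def hi_def using fin mono range by (auto simp: Max_less_iff Min_gr_iff) force
  moreover have "-1 \<le> lo" "hi \<le> 1"
    unfolding lo_def hi_def using fin by auto
  moreover have "r < x \<or> x < r" if "(r, s) \<in> P" for r s
    using that \<open>x \<notin> fst ` P\<close> by (metis fst_conv image_eqI linorder_neqE_linordered_idom)
  ultimately show ?thesis
    by (intro exI[of _ "(lo + hi) / 2"]) (fastforce dest: below above)
qed

lemma fold_re_threshold:
  assumes "finite S"
    and unit: "\<And>a b. (a, b) \<in> S \<Longrightarrow> norm a = 1 \<and> norm b = 1"
    and off_axis: "\<And>a b. (a, b) \<in> S \<Longrightarrow> Im a \<noteq> 0 \<and> sgn (Im b) = sgn (Im a)"
    and signs: "\<And>a b c d. (a, b) \<in> S \<Longrightarrow> (c, d) \<in> S \<Longrightarrow> sgn (wedge a c) = sgn (wedge b d)"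
    and gap: "\<And>a b. (a, b) \<in> S \<Longrightarrow> fold_re a \<noteq> r"
  shows "\<exists>t. -1 < t \<and> t < 1 \<and> (\<forall>(a, b) \<in> S. fold_re b \<noteq> t \<and> (fold_re a < r \<longleftrightarrow> fold_re b < t))"
proof -
  define P where "P = (\<lambda>(a, b). (fold_re a, fold_re b)) ` S"
  have "\<exists>t. -1 < t \<and> t < 1 \<and> (\<forall>(r', s) \<in> P. s \<noteq> t \<and> (r' < r \<longleftrightarrow> s < t))"
  proof (rule monotone_interpolation)
    show "finite P" using \<open>finite S\<close> by (simp add: P_def)
  next
    fix r s r' s' assume "(r, s) \<in> P" "(r', s') \<in> P"
    then obtain a b c d where "(a, b) \<in> S" "(c, d) \<in> S"
      and "r = fold_re a" "s = fold_re b" "r' = fold_re c" "s' = fold_re d"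
      by (auto simp: P_def)
    then show "r < r' \<longleftrightarrow> s < s'"
      using fold_re_less_iff off_axis signs unit by metis
  next
    fix r s assume "(r, s) \<in> P"
    then obtain a b where "(a, b) \<in> S" "s = fold_re b" by (auto simp: P_def)
    then show "-1 < s \<and> s < 1"
      using abs_fold_re_less_1[of b] off_axis unit by (fastforce simp: sgn_0_0)
  next
    show "r \<notin> fst ` P" using gap by (force simp: P_def)
  qed
  then show ?thesis by (auto simp: P_def)
qed

lemma signs_realisable_at_one:
  assumes "finite S" and "(1, 1) \<in> S"
    and unit: "\<And>a b. (a, b) \<in> S \<Longrightarrow> norm a = 1 \<and> norm b = 1"
    and signs: "\<And>a b c d. (a, b) \<in> S \<Longrightarrow> (c, d) \<in> S \<Longrightarrow> sgn (wedge a c) = sgn (wedge b d)"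
    and nondeg: "\<And>a b c d. (a, b) \<in> S \<Longrightarrow> (c, d) \<in> S \<Longrightarrow> (a, b) \<noteq> (c, d) \<Longrightarrow> wedge a c \<noteq> 0"
    and "norm z = 1" and z: "\<And>a b. (a, b) \<in> S \<Longrightarrow> wedge z a \<noteq> 0"
  shows "\<exists>p. norm p = 1 \<and> (\<forall>(a, b) \<in> S. sgn (wedge p b) = sgn (wedge z a))"
proof -
  define S' where "S' = S - {(1, 1)}"
  have off_axis: "(a, b) \<in> S \<and> Im a \<noteq> 0 \<and> Im b \<noteq> 0 \<and> sgn (Im b) = sgn (Im a)"
    if "(a, b) \<in> S'" for a b
    using that nondeg[of a b 1 1] signs[of a b 1 1] \<open>(1, 1) \<in> S\<close>
    by (auto simp: S'_def wedge_one sgn_0_0)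
  have Im_z: "Im z \<noteq> 0" using z[OF \<open>(1, 1) \<in> S\<close>] by (simp add: wedge_one)
  have z_gap: "fold_re a \<noteq> fold_re z" if "(a, b) \<in> S'" for a b
    using z[of a b] sgn_wedge_fold_re[of z a] off_axis[OF that] Im_z unit[of a b] \<open>norm z = 1\<close>
    by (auto simp: sgn_0_0)
  have "\<exists>t. -1 < t \<and> t < 1 \<and> (\<forall>(a, b) \<in> S'. fold_re b \<noteq> t \<and> (fold_re a < fold_re z \<longleftrightarrow> fold_re b < t))"
  proof (rule fold_re_threshold)
    show "finite S'" using \<open>finite S\<close> by (simp add: S'_def)
  next
    fix a b c d assume "(a, b) \<in> S'" "(c, d) \<in> S'"
    then show "sgn (wedge a c) = sgn (wedge b d)" using signs off_axis by simp
  next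
    fix a b assume "(a, b) \<in> S'"
    then show "norm a = 1 \<and> norm b = 1" using unit off_axis by blast
  qed (use off_axis z_gap in simp_all)
  then obtain t where t: "-1 < t" "t < 1"
    and t_sep: "\<forall>(a, b) \<in> S'. fold_re b \<noteq> t \<and> (fold_re a < fold_re z \<longleftrightarrow> fold_re b < t)"
    by blast
  obtain p where p: "norm p = 1" "Im p \<noteq> 0" "sgn (Im p) = sgn (Im z)" "fold_re p = t"
    using fold_re_surj[OF Im_z t] by blast
  have "sgn (wedge p b) = sgn (wedge z a)" if ab: "(a, b) \<in> S" for a b
  proof (cases "(a, b) = (1, 1)")
    case True
    then show ?thesis using p by (simp add: wedge_one)
  next
    case False
    then have ab': "(a, b) \<in> S'" using ab by (simp add: S'_def)
    with t_sep z_gap[OF ab'] have "sgn (fold_re b - t) = sgn (fold_re a - fold_re z)"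
      by (force simp: sgn_if)
    then show ?thesis
      using sgn_wedge_fold_re[of p b] sgn_wedge_fold_re[of z a] p off_axis[OF ab'] Im_z unit[OF ab]
        \<open>norm z = 1\<close>
      by simp
  qed
  with p show ?thesis by blast
qed

lemma signs_realisable:
  assumes "finite S"
    and unit: "\<And>a b. (a, b) \<in> S \<Longrightarrow> norm a = 1 \<and> norm b = 1"
    and signs: "\<And>a b c d. (a, b) \<in> S \<Longrightarrow> (c, d) \<in> S \<Longrightarrow> sgn (wedge a c) = sgn (wedge b d)"
    and nondeg: "\<And>a b c d. (a, b) \<in> S \<Longrightarrow> (c, d) \<in> S \<Longrightarrow> (a, b) \<noteq> (c, d) \<Longrightarrow> wedge a c \<noteq> 0"
    and "norm z = 1" and z: "\<And>a b. (a, b) \<in> S \<Longrightarrow> wedge z a \<noteq> 0"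
  shows "\<exists>p. norm p = 1 \<and> (\<forall>(a, b) \<in> S. sgn (wedge p b) = sgn (wedge z a))"
proof (cases "S = {}")
  case True
  then show ?thesis by (intro exI[of _ 1]) simp
next
  case False
  then obtain a0 b0 where "(a0, b0) \<in> S" by auto
  then have "norm a0 = 1" "norm b0 = 1" "norm (cnj a0) = 1" "norm (cnj b0) = 1" using unit by auto
  note rot = wedge_rotate[OF this(3)] wedge_rotate[OF this(4)]
  define T where "T = (\<lambda>(a, b). (a * cnj a0, b * cnj b0)) ` S"
  have "\<exists>q. norm q = 1 \<and> (\<forall>(a, b) \<in> T. sgn (wedge q b) = sgn (wedge (z * cnj a0) a))"
  proof (rule signs_realisable_at_one)
    have "(a0 * cnj a0, b0 * cnj b0) \<in> T" using \<open>(a0, b0) \<in> S\<close> by (force simp: T_def)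
    then show "(1, 1) \<in> T" using unit_mult_cnj unit[OF \<open>(a0, b0) \<in> S\<close>] by simp
  qed (use \<open>finite S\<close> unit signs nondeg \<open>norm z = 1\<close> \<open>norm a0 = 1\<close> \<open>norm b0 = 1\<close> z
      in \<open>auto simp: T_def rot norm_mult\<close>)
  then obtain q where q: "norm q = 1" "\<forall>(a, b) \<in> T. sgn (wedge q b) = sgn (wedge (z * cnj a0) a)"
    by blast
  have "wedge (q * b0) b = wedge q (b * cnj b0)" for b
    using wedge_rotate[OF \<open>norm (cnj b0) = 1\<close>, of "q * b0" b] unit_mult_cnj[OF \<open>norm b0 = 1\<close>]
    by (simp add: mult.assoc)
  then have "\<forall>(a, b) \<in> S. sgn (wedge (q * b0) b) = sgn (wedge z a)"
    using q(2) by (auto simp: T_def rot)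
  moreover have "norm (q * b0) = 1" using q(1) \<open>norm b0 = 1\<close> by (simp add: norm_mult)
  ultimately show ?thesis by blast
qed

section \<open>Dense antipode-free subsets of the circle\<close>

definition dense_in_circle :: "complex set \<Rightarrow> bool" where
  "dense_in_circle Z \<longleftrightarrow> Z \<subseteq> sphere 0 1 \<and> sphere 0 1 \<subseteq> closure Z \<and> (\<forall>x \<in> Z. - x \<notin> Z)"

lemma dense_in_circle_norm: "dense_in_circle Z \<Longrightarrow> x \<in> Z \<Longrightarrow> norm x = 1"
  unfolding dense_in_circle_def by auto

lemma sgn_wedge_dense_in_circle:
  assumes "dense_in_circle Z" "x \<in> Z" "y \<in> Z"
  shows "sgn (wedge x y) = (if x = y then 0 else if larrow x y then 1 else -1)"
proof -
  have unit: "norm x = 1" "norm y = 1" using assms dense_in_circle_norm by auto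
  have "x \<noteq> - y" using assms unfolding dense_in_circle_def by auto
  then have "x \<noteq> y \<Longrightarrow> wedge x y \<noteq> 0" using wedge_eq_0_iff[OF unit] by simp
  then show ?thesis using larrow_iff_wedge[OF unit] by (auto simp: sgn_if)
qed

lemma tournament_on_dense_in_circle:
  assumes "dense_in_circle Z" shows "tournament_on Z larrow"
  unfolding tournament_on_def
proof (intro conjI ballI impI)
  fix x y assume "x \<in> Z" "y \<in> Z" "x \<noteq> y"
  then show "larrow x y \<noteq> larrow y x"
    using sgn_wedge_dense_in_circle[OF assms, of x y] sgn_wedge_dense_in_circle[OF assms, of y x]
      wedge_swap[of x y] by (auto split: if_splits)
qed simp

lemma partial_iso_iff_sgn_wedge:
  assumes "dense_in_circle Z" "dense_in_circle W" "S \<subseteq> Z \<times> W"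
  shows "partial_iso larrow S \<longleftrightarrow> (\<forall>(a, b) \<in> S. \<forall>(c, d) \<in> S. sgn (wedge a c) = sgn (wedge b d))"
proof -
  have "(a = c \<longleftrightarrow> b = d) \<and> (larrow a c \<longleftrightarrow> larrow b d) \<longleftrightarrow> sgn (wedge a c) = sgn (wedge b d)"
    if "(a, b) \<in> S" "(c, d) \<in> S" for a b c d
  proof -
    have "a \<in> Z" "c \<in> Z" "b \<in> W" "d \<in> W" using that assms(3) by auto
    then show ?thesis
      using sgn_wedge_dense_in_circle[OF assms(1), of a c] sgn_wedge_dense_in_circle[OF assms(2), of b d]
      by (auto split: if_splits)
  qed
  then show ?thesis unfolding partial_iso_def by fast
qed

lemma sgn_mult_pos_iff: "(y :: real) \<noteq> 0 \<Longrightarrow> 0 < sgn y * x \<longleftrightarrow> sgn x = sgn y"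
  by (cases y "0 :: real" rule: linorder_cases; cases x "0 :: real" rule: linorder_cases) auto

lemma dense_in_circle_signs_realisable:
  assumes W: "dense_in_circle W" and "finite S"
    and unit: "\<And>a b. (a, b) \<in> S \<Longrightarrow> norm a = 1 \<and> norm b = 1"
    and signs: "\<And>a b c d. (a, b) \<in> S \<Longrightarrow> (c, d) \<in> S \<Longrightarrow> sgn (wedge a c) = sgn (wedge b d)"
    and nondeg: "\<And>a b c d. (a, b) \<in> S \<Longrightarrow> (c, d) \<in> S \<Longrightarrow> (a, b) \<noteq> (c, d) \<Longrightarrow> wedge a c \<noteq> 0"
    and "norm z = 1" and z: "\<And>a b. (a, b) \<in> S \<Longrightarrow> wedge z a \<noteq> 0"
  shows "\<exists>w \<in> W. \<forall>(a, b) \<in> S. sgn (wedge w b) = sgn (wedge z a)"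
proof -
  have "\<exists>p. norm p = 1 \<and> (\<forall>(a, b) \<in> S. sgn (wedge p b) = sgn (wedge z a))"
    using assms(2-7) by (rule signs_realisable)
  then obtain p where p: "norm p = 1" "\<forall>(a, b) \<in> S. sgn (wedge p b) = sgn (wedge z a)"
    by blast
  text \<open>The sign conditions define an open set, which meets the dense set W since it contains p.\<close>
  define V where "V = (\<Inter>p \<in> S. {q. 0 < sgn (wedge z (fst p)) * wedge q (snd p)})"
  have "open V"
    unfolding V_def wedge_eq using \<open>finite S\<close>
    by (intro open_INT ballI open_Collect_less continuous_intros) auto
  moreover have "p \<in> V"
    using p(2) z by (auto simp: V_def sgn_mult_pos_iff)
  moreover have "p \<in> closure W"
    using W p(1) unfolding dense_in_circle_def by auto
  ultimately obtain w where "w \<in> V" "w \<in> W"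
    using open_Int_closure_eq_empty by blast
  then show ?thesis using z by (force simp: V_def sgn_mult_pos_iff)
qed

lemma dense_in_circle_extend:
  assumes Z: "dense_in_circle Z" and W: "dense_in_circle W"
    and "finite S" "S \<subseteq> Z \<times> W" "partial_iso larrow S" "z \<in> Z"
  shows "\<exists>w \<in> W. partial_iso larrow (insert (z, w) S)"
proof (cases "z \<in> Domain S")
  case True
  then obtain w where "(z, w) \<in> S" by blast
  moreover have "w \<in> W" using calculation \<open>S \<subseteq> Z \<times> W\<close> by blast
  ultimately show ?thesis using assms(5) by (intro bexI[of _ w]) (simp_all add: insert_absorb)
next
  case False
  have mem: "a \<in> Z \<and> b \<in> W" if "(a, b) \<in> S" for a b
    using that \<open>S \<subseteq> Z \<times> W\<close> by blast
  have unit: "norm a = 1 \<and> norm b = 1" if "(a, b) \<in> S" for a b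
    using mem[OF that] dense_in_circle_norm[OF Z] dense_in_circle_norm[OF W] by blast
  have signs: "sgn (wedge a c) = sgn (wedge b d)" if "(a, b) \<in> S" "(c, d) \<in> S" for a b c d
    using partial_iso_iff_sgn_wedge[OF Z W \<open>S \<subseteq> Z \<times> W\<close>] assms(5) that by fast
  have "wedge a c \<noteq> 0" if "(a, b) \<in> S" "(c, d) \<in> S" "(a, b) \<noteq> (c, d)" for a b c d
    using partial_isoD[OF assms(5) that(1,2)] that mem[OF that(1)] mem[OF that(2)]
      sgn_wedge_dense_in_circle[OF Z, of a c] by (auto split: if_splits)
  moreover have "wedge z a \<noteq> 0" if "(a, b) \<in> S" for a b
    using that False \<open>z \<in> Z\<close> mem[OF that] sgn_wedge_dense_in_circle[OF Z, of z a]
    by (auto split: if_splits)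
  ultimately have "\<exists>w \<in> W. \<forall>(a, b) \<in> S. sgn (wedge w b) = sgn (wedge z a)"
    using dense_in_circle_signs_realisable[OF W \<open>finite S\<close> unit signs] dense_in_circle_norm[OF Z \<open>z \<in> Z\<close>]
    by blast
  then obtain w where "w \<in> W" "\<forall>(a, b) \<in> S. sgn (wedge w b) = sgn (wedge z a)" by blast
  then have "partial_iso larrow (insert (z, w) S)"
    using partial_iso_iff_sgn_wedge[OF Z W] \<open>S \<subseteq> Z \<times> W\<close> \<open>z \<in> Z\<close> signs
      wedge_swap[of z] wedge_swap[of w] by (auto simp: sgn_minus)
  with \<open>w \<in> W\<close> show ?thesis by blast
qed

lemma dense_in_circle_nonempty: "dense_in_circle Z \<Longrightarrow> Z \<noteq> {}"
  unfolding dense_in_circle_def by (metis closure_empty empty_iff mem_sphere_0 norm_one subset_empty)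

lemma dense_in_circle_iso_extension:
  assumes Z: "dense_in_circle Z" "countable Z" and W: "dense_in_circle W" "countable W"
    and "finite A" "A \<subseteq> Z" "f ` A \<subseteq> W" "inj_on f A"
    and "\<forall>x \<in> A. \<forall>y \<in> A. larrow x y \<longleftrightarrow> larrow (f x) (f y)"
  shows "\<exists>h. bij_betw h Z W \<and> (\<forall>x \<in> Z. \<forall>y \<in> Z. larrow x y \<longleftrightarrow> larrow (h x) (h y)) \<and>
    (\<forall>x \<in> A. h x = f x)"
proof -
  have "\<exists>h. bij_betw h Z W \<and> (\<forall>x \<in> Z. \<forall>y \<in> Z. larrow x y \<longleftrightarrow> larrow (h x) (h y)) \<and>
    (\<forall>(a, b) \<in> (\<lambda>x. (x, f x)) ` A. h a = b)"
  proof (rule back_and_forth)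
    show "Z \<noteq> {}" "W \<noteq> {}" using Z W dense_in_circle_nonempty by auto
  next
    fix S x assume "finite S" "S \<subseteq> Z \<times> W" "partial_iso larrow S" "x \<in> Z"
    then show "\<exists>y \<in> W. partial_iso larrow (insert (x, y) S)"
      by (rule dense_in_circle_extend[OF Z(1) W(1)])
  next
    fix S y assume "finite S" "S \<subseteq> Z \<times> W" "partial_iso larrow S" "y \<in> W"
    then have "finite (converse S)" "converse S \<subseteq> W \<times> Z" "partial_iso larrow (converse S)"
      using partial_iso_converse by auto
    then obtain x where "x \<in> Z" "partial_iso larrow (insert (y, x) (converse S))"
      using dense_in_circle_extend[OF W(1) Z(1)] \<open>y \<in> W\<close> by blast
    moreover have "converse (insert (y, x) (converse S)) = insert (x, y) S" by auto
    ultimately show "\<exists>x \<in> Z. partial_iso larrow (insert (x, y) S)"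
      using partial_iso_converse by metis
  qed (use assms in \<open>auto simp: partial_iso_graph\<close>)
  then show ?thesis by auto
qed

lemma larrow_cnj:
  assumes "norm x = 1" "norm y = 1"
  shows "larrow (cnj x) (cnj y) \<longleftrightarrow> larrow y x"
  using assms by (simp add: larrow_iff_wedge wedge_cnj)

lemma dense_in_circle_cnj:
  assumes "dense_in_circle Z" shows "dense_in_circle (cnj ` Z)"
  unfolding dense_in_circle_def
proof (intro conjI)
  show "cnj ` Z \<subseteq> sphere 0 1" using assms by (auto simp: dense_in_circle_def)
  show "sphere 0 1 \<subseteq> closure (cnj ` Z)"
  proof
    fix q :: complex assume "q \<in> sphere 0 1"
    then have "cnj q \<in> closure Z" using assms by (auto simp: dense_in_circle_def)
    moreover have "cnj ` closure Z \<subseteq> closure (cnj ` Z)"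
      by (rule image_closure_subset) (auto intro: continuous_intros closure_subset[THEN subsetD])
    ultimately show "q \<in> closure (cnj ` Z)" by (metis complex_cnj_cnj image_eqI subsetD)
  qed
  show "\<forall>x \<in> cnj ` Z. - x \<notin> cnj ` Z"
    using assms by (auto simp: dense_in_circle_def) (metis complex_cnj_cnj complex_cnj_minus)
qed

section \<open>Automorphisms of the betweenness structure\<close>

lemma in_H_imp_autR:
  assumes "in_H Z g" shows "autR Z g"
proof -
  have irreflexive: "\<forall>x \<in> Z. \<forall>y \<in> Z. larrow x y \<longleftrightarrow> F (g x) (g y)"
    if "\<forall>x \<in> Z. \<forall>y \<in> Z. x \<noteq> y \<longrightarrow> (larrow x y \<longleftrightarrow> F (g x) (g y))" "\<And>u. \<not> F u u" for F
  proof (intro ballI)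
    fix x y assume "x \<in> Z" "y \<in> Z"
    then show "larrow x y \<longleftrightarrow> F (g x) (g y)" using that by (cases "x = y") simp_all
  qed
  have "(\<forall>x \<in> Z. \<forall>y \<in> Z. larrow x y \<longleftrightarrow> larrow (g x) (g y)) \<or>
      (\<forall>x \<in> Z. \<forall>y \<in> Z. larrow x y \<longleftrightarrow> (\<lambda>x y. larrow y x) (g x) (g y))"
    using assms unfolding in_H_def
  proof (elim conjE disjE)
    assume "\<forall>x \<in> Z. \<forall>y \<in> Z. x \<noteq> y \<longrightarrow> (larrow x y \<longleftrightarrow> larrow (g x) (g y))"
    from irreflexive[OF this larrow_irrefl] show ?thesis by (rule disjI1)
  next
    assume "\<forall>x \<in> Z. \<forall>y \<in> Z. x \<noteq> y \<longrightarrow> (larrow x y \<longleftrightarrow> larrow (g y) (g x))"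
    from irreflexive[of "\<lambda>x y. larrow y x", OF this larrow_irrefl] show ?thesis by (rule disjI2)
  qed
  then have "\<forall>x \<in> Z. \<forall>y \<in> Z. \<forall>z \<in> Z. between larrow x y z \<longleftrightarrow> between larrow (g x) (g y) (g z)"
  proof
    assume pres: "\<forall>x \<in> Z. \<forall>y \<in> Z. larrow x y \<longleftrightarrow> larrow (g x) (g y)"
    show ?thesis by (intro ballI) (rule between_transfer[where F = larrow, OF pres])
  next
    assume rev: "\<forall>x \<in> Z. \<forall>y \<in> Z. larrow x y \<longleftrightarrow> (\<lambda>x y. larrow y x) (g x) (g y)"
    show ?thesis
      using between_transfer[where F = "\<lambda>x y. larrow y x", OF rev] by (simp add: between_converse[of larrow])
  qed
  moreover have "bij_betw g Z Z" using assms by (simp add: in_H_def)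
  ultimately show ?thesis by (simp add: autR_def Rrel_eq_between)
qed

lemma autR_imp_in_H:
  assumes "dense_in_circle Z" "autR Z g" shows "in_H Z g"
proof -
  have "bij_betw g Z Z" and "\<forall>x \<in> Z. \<forall>y \<in> Z. \<forall>z \<in> Z. between larrow x y z \<longleftrightarrow> between larrow (g x) (g y) (g z)"
    using assms(2) by (simp_all add: autR_def Rrel_eq_between)
  then have "(\<forall>x \<in> Z. \<forall>y \<in> Z. larrow x y \<longleftrightarrow> larrow (g x) (g y)) \<or>
      (\<forall>x \<in> Z. \<forall>y \<in> Z. larrow x y \<longleftrightarrow> larrow (g y) (g x))"
    by (intro between_iso_preserves_or_reverses[OF tournament_on_dense_in_circle[OF assms(1)]])
      (auto simp: bij_betw_def)
  then show ?thesis using \<open>bij_betw g Z Z\<close> unfolding in_H_def by (elim disjE) simp_all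
qed

lemma extend_to_in_H:
  assumes Z: "dense_in_circle Z" "countable Z" and "finite A" "A \<subseteq> Z" "f ` A \<subseteq> Z" "inj_on f A"
    and orientation: "(\<forall>x \<in> A. \<forall>y \<in> A. larrow x y \<longleftrightarrow> larrow (f x) (f y)) \<or>
      (\<forall>x \<in> A. \<forall>y \<in> A. larrow x y \<longleftrightarrow> larrow (f y) (f x))"
  shows "\<exists>g. in_H Z g \<and> (\<forall>x \<in> A. g x = f x)"
  using orientation
proof
  assume "\<forall>x \<in> A. \<forall>y \<in> A. larrow x y \<longleftrightarrow> larrow (f x) (f y)"
  from dense_in_circle_iso_extension[OF Z Z assms(3-6) this] show ?thesis
    by (auto simp: in_H_def)
next
  assume rev: "\<forall>x \<in> A. \<forall>y \<in> A. larrow x y \<longleftrightarrow> larrow (f y) (f x)"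
  text \<open>Complex conjugation reverses the local order, turning f into an order-preserving map.\<close>
  define W where "W = cnj ` Z"
  have W: "dense_in_circle W" "countable W" using Z dense_in_circle_cnj by (simp_all add: W_def)
  have unit: "norm x = 1" if "x \<in> Z" for x using dense_in_circle_norm[OF Z(1) that] .
  have "\<forall>x \<in> A. \<forall>y \<in> A. larrow x y \<longleftrightarrow> larrow (cnj (f x)) (cnj (f y))"
    using rev larrow_cnj[OF unit unit] \<open>f ` A \<subseteq> Z\<close> by (simp add: image_subset_iff)
  moreover have "inj_on (\<lambda>x. cnj (f x)) A" "(\<lambda>x. cnj (f x)) ` A \<subseteq> W"
    using \<open>inj_on f A\<close> \<open>f ` A \<subseteq> Z\<close> by (auto simp: inj_on_def W_def)
  ultimately obtain h where h: "bij_betw h Z W" "\<forall>x \<in> Z. \<forall>y \<in> Z. larrow x y \<longleftrightarrow> larrow (h x) (h y)"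
    "\<forall>x \<in> A. h x = cnj (f x)"
    using dense_in_circle_iso_extension[OF Z W \<open>finite A\<close> \<open>A \<subseteq> Z\<close>] by blast
  have "bij_betw cnj W Z"
    unfolding W_def by (rule bij_betw_imageI) (auto simp: inj_on_def image_image)
  with h(1) have "bij_betw (cnj \<circ> h) Z Z" by (rule bij_betw_trans)
  moreover have "larrow x y \<longleftrightarrow> larrow (cnj (h y)) (cnj (h x))" if "x \<in> Z" "y \<in> Z" for x y
  proof -
    have "h x \<in> W" "h y \<in> W" using h(1) that bij_betwE by blast+
    then show ?thesis using h(2) that larrow_cnj dense_in_circle_norm[OF W(1)] by simp
  qed
  ultimately have "in_H Z (cnj \<circ> h)" by (simp add: in_H_def)
  moreover have "\<forall>x \<in> A. (cnj \<circ> h) x = f x" using h(3) by simp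
  ultimately show ?thesis by blast
qed

theorem lemma3p12:
  fixes Z :: "complex set"
  assumes "countable Z"
    and "Z \<subseteq> sphere 0 1"
    and "sphere 0 1 \<subseteq> closure Z"
    and "\<And>x. x \<in> Z \<Longrightarrow> - x \<notin> Z"
  shows "(\<forall>g. in_H Z g \<longleftrightarrow> autR Z g) \<and>
         (\<forall>A f. finite A \<and> A \<subseteq> Z \<and> inj_on f A \<and> f ` A \<subseteq> Z \<and>
              (\<forall>x\<in>A. \<forall>y\<in>A. \<forall>z\<in>A. Rrel x y z \<longleftrightarrow> Rrel (f x) (f y) (f z))
            \<longrightarrow> (\<exists>g. autR Z g \<and> (\<forall>x\<in>A. g x = f x)))"
proof (intro conjI allI impI)
  have Z: "dense_in_circle Z" using assms unfolding dense_in_circle_def by blast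
  show H_eq_Aut: "in_H Z g \<longleftrightarrow> autR Z g" for g
    using in_H_imp_autR autR_imp_in_H[OF Z] by (rule iffI)
  fix A f
  assume "finite A \<and> A \<subseteq> Z \<and> inj_on f A \<and> f ` A \<subseteq> Z \<and>
    (\<forall>x\<in>A. \<forall>y\<in>A. \<forall>z\<in>A. Rrel x y z \<longleftrightarrow> Rrel (f x) (f y) (f z))"
  then have A: "finite A" "A \<subseteq> Z" "f ` A \<subseteq> Z" "inj_on f A"
    and "\<forall>x \<in> A. \<forall>y \<in> A. \<forall>z \<in> A. between larrow x y z \<longleftrightarrow> between larrow (f x) (f y) (f z)"
    by (simp_all add: Rrel_eq_between)
  then have "(\<forall>x \<in> A. \<forall>y \<in> A. larrow x y \<longleftrightarrow> larrow (f x) (f y)) \<or>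
      (\<forall>x \<in> A. \<forall>y \<in> A. larrow x y \<longleftrightarrow> larrow (f y) (f x))"
    by (intro between_iso_preserves_or_reverses[OF tournament_on_dense_in_circle[OF Z]])
  then obtain g where "in_H Z g" "\<forall>x \<in> A. g x = f x"
    using extend_to_in_H[OF Z \<open>countable Z\<close> A] by blast
  then show "\<exists>g. autR Z g \<and> (\<forall>x \<in> A. g x = f x)" using H_eq_Aut by blast
qed

end
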